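(* For integers $n\ge m\ge0$ of the same parity, \[ d_{n,m}=\frac{1}{((n+m)/2)!}\,r_{(n+m)/2,(n-m)/2}, \] and $d_{n,m}=0$ when $n$ and $m$ have different parities. In particular, the number of relaxed binary trees of size $n$ equals $n!\,d_{2n,0}$.
   Context: A Dyck meander is a lattice path from $(0,0)$ with steps $U=(1,1)$, $D=(1,-1)$ never going below $y=0$; an up step starting at $(a,b)$ has weight $(a-b+2)/(a+b+2)$, a meander's weight is the product of its up-step weights, and $d_{n,m}$ is the total weight of meanders ending at $(n,m)$. A horizontally decorated path is a lattice path from $(0,0)$ with steps $H=(1,0)$, $V=(0,1)$ in the region $0\le y\le x$, each $H$ step decorated by a number in $\{1,\dots,k+1\}$ where $k$ is its $y$-coordinate; $r_{a,b}$ is the number of horizontally decorated paths ending at $(a,b)$. A relaxed binary tree of size $n$ is obtained from a rooted plane binary tree with $n$ internal nodes (its spine) by keeping the left-most leaf and turning every other leaf $\ell$ into a pointer to a vertex (an internal node or the left-most leaf) preceding $\ell$ in postorder (left subtree, right subtree, root); two relaxed trees are equal iff they have the same spine and the same pointer targets. *)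

theory Defs
  imports Complex_Main
begin

text \<open>A path of U/D steps is a list of booleans (True = U = (1,1), False = D = (1,-1)).\<close>

fun hgt :: "bool list \<Rightarrow> int" where
  "hgt [] = 0"
| "hgt (s # p) = (if s then 1 else -1) + hgt p"

definition meander :: "bool list \<Rightarrow> bool" where
  "meander p \<longleftrightarrow> (\<forall>i \<le> length p. hgt (take i p) \<ge> 0)"

text \<open>The i-th step starts at (i, hgt (take i p)); an up step starting at (a,b)
  has weight (a-b+2)/(a+b+2); the meander weight is the product over up steps.\<close>
definition mweight :: "bool list \<Rightarrow> real" where
  "mweight p = (\<Prod>i<length p. if p ! i
      then (real i - real_of_int (hgt (take i p)) + 2) / (real i + real_of_int (hgt (take i p)) + 2)
      else 1)"

definition dnm :: "nat \<Rightarrow> nat \<Rightarrow> real" where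
  "dnm n m = (\<Sum>p \<in> {p. length p = n \<and> meander p \<and> hgt p = int m}. mweight p)"

text \<open>A decorated path is a list of steps: None = V = (0,1), Some j = H = (1,0)
  decorated by j. Before step i the position is (#H in take i, #V in take i).\<close>

definition nH :: "nat option list \<Rightarrow> nat" where
  "nH p = length (filter (\<lambda>s. s \<noteq> None) p)"

definition nV :: "nat option list \<Rightarrow> nat" where
  "nV p = length (filter (\<lambda>s. s = None) p)"

definition hdec_path :: "nat option list \<Rightarrow> bool" where
  "hdec_path p \<longleftrightarrow>
     (\<forall>i \<le> length p. nV (take i p) \<le> nH (take i p)) \<and>
     (\<forall>i < length p. \<forall>j. p ! i = Some j \<longrightarrow> j \<in> {1 .. nV (take i p) + 1})"

definition rab :: "nat \<Rightarrow> nat \<Rightarrow> nat" where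
  "rab a b = card {p. hdec_path p \<and> nH p = a \<and> nV p = b}"

datatype bt = L | N bt bt

fun isize :: "bt \<Rightarrow> nat" where
  "isize L = 0"
| "isize (N l r) = Suc (isize l + isize r)"

text \<open>Positions of all vertices (internal nodes and leaves), as paths from the root
  (False = left, True = right), listed in postorder (left subtree, right subtree, root).\<close>
fun postorder :: "bt \<Rightarrow> bool list list" where
  "postorder L = [[]]"
| "postorder (N l r) = map (Cons False) (postorder l) @ map (Cons True) (postorder r) @ [[]]"

fun leaves :: "bt \<Rightarrow> bool list list" where
  "leaves L = [[]]"
| "leaves (N l r) = map (Cons False) (leaves l) @ map (Cons True) (leaves r)"

fun inner :: "bt \<Rightarrow> bool list list" where
  "inner L = []"
| "inner (N l r) = map (Cons False) (inner l) @ map (Cons True) (inner r) @ [[]]"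

fun leftmost :: "bt \<Rightarrow> bool list" where
  "leftmost L = []"
| "leftmost (N l r) = False # leftmost l"

definition precedes :: "bt \<Rightarrow> bool list \<Rightarrow> bool list \<Rightarrow> bool" where
  "precedes t v w \<longleftrightarrow> (\<exists>i j. i < j \<and> j < length (postorder t) \<and>
      postorder t ! i = v \<and> postorder t ! j = w)"

text \<open>A relaxed binary tree: a spine t together with a pointer map defined exactly on the
  leaves other than the left-most one, sending each such leaf to an internal node or
  the left-most leaf preceding it in postorder.\<close>
definition relaxed_trees :: "nat \<Rightarrow> (bt \<times> (bool list \<Rightarrow> bool list option)) set" where
  "relaxed_trees n = {(t, f). isize t = n \<and>
      dom f = set (leaves t) - {leftmost t} \<and>
      (\<forall>l v. f l = Some v \<longrightarrow>
          (v \<in> set (inner t) \<or> v = leftmost t) \<and> precedes t v l)}"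

end

theory Submission
  imports Defs "HOL-Library.FuncSet"
begin

(*
  All three quantities obey the recurrence of decorated paths: r 0 0 = 1, r a b = 0 for a < b, and
    r (a + 1) b = (b + 1) * r a b + [b > 0] * r (a + 1) (b - 1)   for b <= a + 1
  (the last step of a path is either an H step at height b, with b + 1 decorations, or a V step),
  which determines r = rab.

  A meander with a up and b down steps ends at (a + b, a - b). Removing its last step shows that
  a! * d (a + b) (a - b) satisfies the recurrence: a last up step has weight (2b + 2) / (2a + 2),
  which the factor a + 1 of the factorial turns into b + 1.

  In a relaxed tree, a leaf preceded in postorder by k internal nodes has k + 1 possible targets, so
  the number of pointer maps of a spine is a product of such factors. Summing these products over
  forests of a - b + 1 spines with b internal nodes in total and removing the last spine gives the
  recurrence: a last leaf has b + 1 targets, and a last spine N l r may be replaced by the two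
  spines l and r. Forests with a = b = n are single spines of size n.
*)

section \<open>Decorated paths\<close>

lemma all_prefixes_snoc_iff:
  "(\<forall>i \<le> length (p @ [s]). P (take i (p @ [s]))) \<longleftrightarrow> (\<forall>i \<le> length p. P (take i p)) \<and> P (p @ [s])"
  by (auto simp: le_Suc_eq)

lemma all_nth_snoc_iff:
  "(\<forall>i < length (p @ [s]). Q i ((p @ [s]) ! i) (take i (p @ [s])))
     \<longleftrightarrow> (\<forall>i < length p. Q i (p ! i) (take i p)) \<and> Q (length p) s p"
  by (auto simp: less_Suc_eq nth_append)

lemma nH_append [simp]: "nH (p @ q) = nH p + nH q"
  by (simp add: nH_def)

lemma nV_append [simp]: "nV (p @ q) = nV p + nV q"
  by (simp add: nV_def)

lemma nH_plus_nV: "nH p + nV p = length p"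
  by (induction p) (auto simp: nH_def nV_def)

lemma hdec_path_Nil: "hdec_path []"
  by (simp add: hdec_path_def nH_def nV_def)

lemma hdec_path_snoc:
  "hdec_path (p @ [s]) \<longleftrightarrow>
     hdec_path p \<and> nV (p @ [s]) \<le> nH (p @ [s]) \<and> (\<forall>j. s = Some j \<longrightarrow> j \<in> {1 .. nV p + 1})"
  unfolding hdec_path_def
  using all_prefixes_snoc_iff[of p s "\<lambda>q. nV q \<le> nH q"]
    all_nth_snoc_iff[of p s "\<lambda>i x q. \<forall>j. x = Some j \<longrightarrow> j \<in> {1 .. nV q + 1}"]
  by blast

lemma hdec_path_nV_le_nH: "hdec_path p \<Longrightarrow> nV p \<le> nH p"
  unfolding hdec_path_def by (metis order.refl take_all)

definition hdec_paths :: "nat \<Rightarrow> nat \<Rightarrow> nat option list set" where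
  "hdec_paths a b = {p. hdec_path p \<and> nH p = a \<and> nV p = b}"

lemma rab_eq_card_hdec_paths: "rab a b = card (hdec_paths a b)"
  by (simp add: rab_def hdec_paths_def)

lemma finite_hdec_paths: "finite (hdec_paths a b)"
proof -
  have "set p \<subseteq> insert None (Some ` {1 .. b + 1})" if "p \<in> hdec_paths a b" for p
  proof
    fix s assume "s \<in> set p"
    then obtain i where i: "i < length p" "p ! i = s" by (auto simp: in_set_conv_nth)
    have "nV (take i p) \<le> b"
      using that nV_append[of "take i p" "drop i p"] by (simp add: hdec_paths_def)
    then show "s \<in> insert None (Some ` {1 .. b + 1})"
      using that i unfolding hdec_paths_def hdec_path_def by (cases s) fastforce+
  qed
  moreover have "length p = a + b" if "p \<in> hdec_paths a b" for p
    using that nH_plus_nV[of p] by (simp add: hdec_paths_def)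
  ultimately have "hdec_paths a b \<subseteq> {p. set p \<subseteq> insert None (Some ` {1 .. b + 1}) \<and> length p = a + b}"
    by blast
  then show ?thesis
    by (rule finite_subset) (simp add: finite_lists_length_eq)
qed

lemma hdec_paths_Suc:
  assumes "b \<le> Suc a"
  shows "hdec_paths (Suc a) b =
           (\<lambda>(p, j). p @ [Some j]) ` (hdec_paths a b \<times> {1 .. b + 1})
         \<union> (if b = 0 then {} else (\<lambda>p. p @ [None]) ` hdec_paths (Suc a) (b - 1))"
    (is "_ = ?H \<union> ?V")
proof (intro equalityI subsetI)
  fix p assume "p \<in> hdec_paths (Suc a) b"
  then have p: "hdec_path p" "nH p = Suc a" "nV p = b" by (auto simp: hdec_paths_def)
  then have "p \<noteq> []" by (auto simp: nH_def)
  then obtain q s where q: "p = q @ [s]" by (metis rev_exhaust)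
  have hq: "hdec_path q" "\<forall>j. s = Some j \<longrightarrow> j \<in> {1 .. nV q + 1}"
    using p(1) q hdec_path_snoc by auto
  show "p \<in> ?H \<union> ?V"
  proof (cases s)
    case None
    then have "b \<noteq> 0" "q \<in> hdec_paths (Suc a) (b - 1)"
      using p q hq by (auto simp: hdec_paths_def nH_def nV_def)
    then show ?thesis using q None by auto
  next
    case (Some j)
    then have "(q, j) \<in> hdec_paths a b \<times> {1 .. b + 1}"
      using p q hq by (auto simp: hdec_paths_def nH_def nV_def)
    then show ?thesis using q Some by force
  qed
next
  fix p assume "p \<in> ?H \<union> ?V"
  then show "p \<in> hdec_paths (Suc a) b"
    using assms by (auto simp: hdec_paths_def hdec_path_snoc nH_def nV_def split: if_splits)
qed

lemma rab_0_0: "rab 0 0 = 1"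
proof -
  have "hdec_paths 0 0 = {[]}"
  proof
    show "hdec_paths 0 0 \<subseteq> {[]}"
    proof
      fix p assume "p \<in> hdec_paths 0 0"
      then have "length p = 0" using nH_plus_nV[of p] by (simp add: hdec_paths_def)
      then show "p \<in> {[]}" by simp
    qed
    show "{[]} \<subseteq> hdec_paths 0 0"
      by (simp add: hdec_paths_def hdec_path_Nil nH_def nV_def)
  qed
  then show ?thesis by (simp add: rab_eq_card_hdec_paths)
qed

lemma rab_eq_0:
  assumes "a < b"
  shows "rab a b = 0"
proof -
  have "hdec_paths a b = {}"
    using assms by (auto simp: hdec_paths_def dest: hdec_path_nV_le_nH)
  then show ?thesis by (simp add: rab_eq_card_hdec_paths)
qed

lemma rab_Suc:
  assumes "b \<le> Suc a"
  shows "rab (Suc a) b = (b + 1) * rab a b + (if b = 0 then 0 else rab (Suc a) (b - 1))"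
proof -
  have inj_H: "inj_on (\<lambda>(p, j). p @ [Some j]) X" for X :: "(nat option list \<times> nat) set"
    by (auto simp: inj_on_def)
  have inj_V: "inj_on (\<lambda>p. p @ [None]) X" for X :: "nat option list set"
    by (auto simp: inj_on_def)
  have "rab (Suc a) b =
          card ((\<lambda>(p, j). p @ [Some j]) ` (hdec_paths a b \<times> {1 .. b + 1}))
        + card (if b = 0 then {} else (\<lambda>p. p @ [None]) ` hdec_paths (Suc a) (b - 1))"
    unfolding rab_eq_card_hdec_paths hdec_paths_Suc[OF assms]
    by (rule card_Un_disjoint) (auto simp: finite_hdec_paths)
  also have "\<dots> = (b + 1) * rab a b + (if b = 0 then 0 else rab (Suc a) (b - 1))"
    by (simp add: card_image[OF inj_H] card_image[OF inj_V] card_cartesian_product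
        rab_eq_card_hdec_paths)
  finally show ?thesis .
qed

lemma eq_rab_if_rec:
  fixes f :: "nat \<Rightarrow> nat \<Rightarrow> 'a :: semiring_1"
  assumes f_0_0: "f 0 0 = 1"
    and f_eq_0: "\<And>a b. a < b \<Longrightarrow> f a b = 0"
    and f_Suc: "\<And>a b. b \<le> Suc a \<Longrightarrow>
                  f (Suc a) b = of_nat (b + 1) * f a b + (if b = 0 then 0 else f (Suc a) (b - 1))"
  shows "f a b = of_nat (rab a b)"
proof (induction a arbitrary: b)
  case 0
  show ?case
    by (cases b) (simp_all add: f_0_0 rab_0_0 f_eq_0 rab_eq_0)
next
  case (Suc a)
  note IH_a = Suc.IH
  show ?case
  proof (induction b)
    case 0
    show ?case using f_Suc[of 0 a] rab_Suc[of 0 a] IH_a by simp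
  next
    case (Suc b)
    show ?case
    proof (cases "Suc b \<le> Suc a")
      case True
      then show ?thesis using f_Suc[OF True] rab_Suc[OF True] IH_a Suc.IH
        by (simp add: algebra_simps)
    next
      case False
      then show ?thesis by (simp add: f_eq_0 rab_eq_0)
    qed
  qed
qed

section \<open>Meanders\<close>

lemma hgt_append [simp]: "hgt (p @ q) = hgt p + hgt q"
  by (induction p) auto

lemma hgt_le_length: "hgt p \<le> int (length p)"
  by (induction p) auto

lemma even_length_plus_hgt: "even (int (length p) + hgt p)"
  by (induction p) auto

lemma meander_snoc: "meander (p @ [s]) \<longleftrightarrow> meander p \<and> hgt (p @ [s]) \<ge> 0"
  unfolding meander_def using all_prefixes_snoc_iff[of p s "\<lambda>q. hgt q \<ge> 0"] by simp

lemma meander_hgt_nonneg: "meander p \<Longrightarrow> hgt p \<ge> 0"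
  unfolding meander_def by (metis order.refl take_all)

lemma mweight_snoc:
  "mweight (p @ [s]) = mweight p *
     (if s then (real (length p) - real_of_int (hgt p) + 2) / (real (length p) + real_of_int (hgt p) + 2)
      else 1)"
proof -
  have "(\<Prod>i<length p. if (p @ [s]) ! i
          then (real i - real_of_int (hgt (take i (p @ [s]))) + 2) / (real i + real_of_int (hgt (take i (p @ [s]))) + 2)
          else 1) = mweight p"
    unfolding mweight_def by (rule prod.cong) (auto simp: nth_append)
  then show ?thesis
    unfolding mweight_def by (simp add: nth_append)
qed

definition meanders :: "nat \<Rightarrow> nat \<Rightarrow> bool list set" where
  "meanders n m = {p. length p = n \<and> meander p \<and> hgt p = int m}"

lemma dnm_eq_sum_meanders: "dnm n m = sum mweight (meanders n m)"
  by (simp add: dnm_def meanders_def)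

lemma finite_meanders: "finite (meanders n m)"
proof -
  have "finite {p :: bool list. set p \<subseteq> UNIV \<and> length p = n}"
    by (rule finite_lists_length_eq) simp
  then show ?thesis by (rule rev_finite_subset) (auto simp: meanders_def)
qed

lemma meanders_0_0: "meanders 0 0 = {[]}"
  by (auto simp: meanders_def meander_def)

lemma meanders_eq_empty:
  assumes "n < m \<or> odd (n + m)"
  shows "meanders n m = {}"
proof -
  have False if "length p = n" "hgt p = int m" for p
  proof -
    have "int m \<le> int n" "even (int (n + m))"
      using that hgt_le_length[of p] even_length_plus_hgt[of p] by simp_all
    then show False using assms by simp
  qed
  then show ?thesis by (auto simp: meanders_def)
qed

lemma dnm_eq_0: "n < m \<or> odd (n + m) \<Longrightarrow> dnm n m = 0"
  by (simp add: dnm_eq_sum_meanders meanders_eq_empty)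

lemma meanders_Suc:
  "meanders (Suc n) m = (\<lambda>p. p @ [False]) ` meanders n (Suc m)
     \<union> (if m = 0 then {} else (\<lambda>p. p @ [True]) ` meanders n (m - 1))"
  (is "_ = ?D \<union> ?U")
proof (intro equalityI subsetI)
  fix p assume "p \<in> meanders (Suc n) m"
  then have p: "length p = Suc n" "meander p" "hgt p = int m" by (auto simp: meanders_def)
  then obtain q s where q: "p = q @ [s]" by (metis length_Suc_conv_rev)
  have q_meander: "meander q" and q_length: "length q = n"
    using p q meander_snoc by auto
  show "p \<in> ?D \<union> ?U"
  proof (cases s)
    case True
    then have "hgt q = int m - 1" using p(3) q by simp
    with meander_hgt_nonneg[OF q_meander] have "m \<noteq> 0" "hgt q = int (m - 1)" by auto
    then show ?thesis using q True q_meander q_length by (auto simp: meanders_def)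
  next
    case False
    then have "hgt q = int (Suc m)" using p(3) q by simp
    then show ?thesis using q False q_meander q_length by (auto simp: meanders_def)
  qed
next
  fix p assume "p \<in> ?D \<union> ?U"
  then show "p \<in> meanders (Suc n) m"
    by (auto simp: meanders_def meander_snoc split: if_splits)
qed

lemma dnm_Suc:
  "dnm (Suc n) m = dnm n (Suc m) +
     (if m = 0 then 0 else (real n - real (m - 1) + 2) / (real n + real (m - 1) + 2) * dnm n (m - 1))"
proof -
  have inj: "inj_on (\<lambda>p. p @ [s]) A" for s :: bool and A by (auto simp: inj_on_def)
  have down: "sum mweight ((\<lambda>p. p @ [False]) ` meanders n (Suc m)) = dnm n (Suc m)"
    by (simp add: sum.reindex[OF inj] dnm_eq_sum_meanders mweight_snoc)
  define w where "w = (real n - real (m - 1) + 2) / (real n + real (m - 1) + 2)"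
  have "sum mweight ((\<lambda>p. p @ [True]) ` meanders n (m - 1)) = (\<Sum>p\<in>meanders n (m - 1). mweight p * w)"
    by (auto simp: sum.reindex[OF inj] mweight_snoc meanders_def w_def intro!: sum.cong)
  then have up: "sum mweight ((\<lambda>p. p @ [True]) ` meanders n (m - 1)) = w * dnm n (m - 1)"
    by (simp add: dnm_eq_sum_meanders sum_distrib_left mult.commute)
  show ?thesis
  proof (cases "m = 0")
    case True
    then show ?thesis using down by (simp add: dnm_eq_sum_meanders meanders_Suc)
  next
    case False
    have "dnm (Suc n) m = sum mweight ((\<lambda>p. p @ [False]) ` meanders n (Suc m))
                        + sum mweight ((\<lambda>p. p @ [True]) ` meanders n (m - 1))"
      unfolding dnm_eq_sum_meanders meanders_Suc if_not_P[OF False]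
      by (rule sum.union_disjoint) (auto simp: finite_meanders)
    then show ?thesis using down up False by (simp add: w_def)
  qed
qed

(* Meanders with a up and b down steps; the value 0 for b > a matches rab_eq_0. *)
definition scaled_dnm :: "nat \<Rightarrow> nat \<Rightarrow> real" where
  "scaled_dnm a b = (if b \<le> a then fact a * dnm (a + b) (a - b) else 0)"

lemma scaled_dnm_Suc:
  assumes "b \<le> Suc a"
  shows "scaled_dnm (Suc a) b = (b + 1) * scaled_dnm a b + (if b = 0 then 0 else scaled_dnm (Suc a) (b - 1))"
proof -
  have up_weight: "(real (a + b) - real (a - b) + 2) / (real (a + b) + real (a - b) + 2) = (b + 1) / (a + 1)"
    if "b \<le> a"
    using that by (simp add: of_nat_diff field_simps)
  have last_step: "dnm (Suc (a + b)) (Suc a - b) = dnm (a + b) (Suc (Suc a - b))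
      + (if b \<le> a then (b + 1) / (a + 1) * dnm (a + b) (a - b) else 0)"
    using dnm_Suc[of "a + b" "Suc a - b"] assms up_weight by (auto simp: Suc_diff_le)
  have last_down: "fact (Suc a) * dnm (a + b) (Suc (Suc a - b))
      = (if b = 0 then 0 else scaled_dnm (Suc a) (b - 1))"
  proof (cases b)
    case 0
    then show ?thesis by (simp add: dnm_eq_0)
  next
    case (Suc b')
    then have "a + b = Suc a + b'" "Suc (Suc a - b) = Suc a - b'" using assms by auto
    then show ?thesis using Suc assms by (simp add: scaled_dnm_def)
  qed
  have last_up: "fact (Suc a) * (if b \<le> a then (b + 1) / (a + 1) * dnm (a + b) (a - b) else 0)
      = (b + 1) * scaled_dnm a b"
  proof (cases "b \<le> a")
    case True
    have "fact (Suc a) * ((b + 1) / (a + 1) * x) = (b + 1) * (fact a * x)" for x :: real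
      by (simp add: field_simps)
    then show ?thesis using True by (simp add: scaled_dnm_def)
  next
    case False
    then show ?thesis by (simp add: scaled_dnm_def)
  qed
  have "scaled_dnm (Suc a) b = fact (Suc a) * dnm (Suc (a + b)) (Suc a - b)"
    using assms by (simp add: scaled_dnm_def)
  also have "\<dots> = (b + 1) * scaled_dnm a b + (if b = 0 then 0 else scaled_dnm (Suc a) (b - 1))"
    unfolding last_step distrib_left last_down last_up by simp
  finally show ?thesis by simp
qed

lemma scaled_dnm_eq_rab: "scaled_dnm a b = real (rab a b)"
proof (rule eq_rab_if_rec)
  show "scaled_dnm 0 0 = 1"
    by (simp add: scaled_dnm_def dnm_eq_sum_meanders meanders_0_0 mweight_def)
  show "scaled_dnm a b = 0" if "a < b" for a b
    using that by (simp add: scaled_dnm_def)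
  show "scaled_dnm (Suc a) b = of_nat (b + 1) * scaled_dnm a b
          + (if b = 0 then 0 else scaled_dnm (Suc a) (b - 1))" if "b \<le> Suc a" for a b
    using scaled_dnm_Suc[OF that] by simp
qed

lemma dnm_eq_rab_div_fact:
  assumes "m \<le> n" "even (n + m)"
  shows "dnm n m = real (rab ((n + m) div 2) ((n - m) div 2)) / fact ((n + m) div 2)"
proof -
  define a b where "a = (n + m) div 2" and "b = (n - m) div 2"
  obtain k where k: "n + m = 2 * k" using assms(2) by (rule evenE)
  then have "a = k" "b = k - m" using assms(1) unfolding a_def b_def by auto
  then have "n = a + b" "m = a - b" "b \<le> a" using k assms(1) by auto
  then have "fact a * dnm n m = real (rab a b)"
    using scaled_dnm_eq_rab[of a b] by (simp add: scaled_dnm_def)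
  then show ?thesis unfolding a_def[symmetric] b_def[symmetric] by (simp add: field_simps)
qed

section \<open>Pointer maps of relaxed trees\<close>

definition precedes_in :: "'a list \<Rightarrow> 'a \<Rightarrow> 'a \<Rightarrow> bool" where
  "precedes_in xs v w \<longleftrightarrow> (\<exists>i j. i < j \<and> j < length xs \<and> xs ! i = v \<and> xs ! j = w)"

lemma precedes_in_Nil [simp]: "\<not> precedes_in [] v w"
  by (simp add: precedes_in_def)

lemma precedes_in_Cons:
  "precedes_in (x # xs) v w \<longleftrightarrow> x = v \<and> w \<in> set xs \<or> precedes_in xs v w"
proof
  assume "precedes_in (x # xs) v w"
  then obtain i j where ij: "i < j" "j < Suc (length xs)" "(x # xs) ! i = v" "(x # xs) ! j = w"
    by (auto simp: precedes_in_def)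
  then obtain j' where j': "j = Suc j'" by (cases j) auto
  show "x = v \<and> w \<in> set xs \<or> precedes_in xs v w"
  proof (cases i)
    case 0
    then show ?thesis using ij j' by auto
  next
    case (Suc i')
    then have "precedes_in xs v w"
      using ij j' unfolding precedes_in_def by (intro exI[of _ i'] exI[of _ j']) auto
    then show ?thesis ..
  qed
next
  assume "x = v \<and> w \<in> set xs \<or> precedes_in xs v w"
  then show "precedes_in (x # xs) v w"
  proof
    assume "x = v \<and> w \<in> set xs"
    then obtain j where "j < length xs" "xs ! j = w" "x = v" by (auto simp: in_set_conv_nth)
    then show ?thesis unfolding precedes_in_def by (intro exI[of _ 0] exI[of _ "Suc j"]) auto
  next
    assume "precedes_in xs v w"
    then obtain i j where "i < j" "j < length xs" "xs ! i = v" "xs ! j = w"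
      by (auto simp: precedes_in_def)
    then show ?thesis unfolding precedes_in_def by (intro exI[of _ "Suc i"] exI[of _ "Suc j"]) auto
  qed
qed

lemma precedes_in_append:
  "precedes_in (xs @ ys) v w \<longleftrightarrow> precedes_in xs v w \<or> precedes_in ys v w \<or> v \<in> set xs \<and> w \<in> set ys"
  by (induction xs) (auto simp: precedes_in_Cons)

lemma precedes_in_map:
  "inj f \<Longrightarrow> precedes_in (map f xs) (f v) (f w) \<longleftrightarrow> precedes_in xs v w"
  by (induction xs) (auto simp: precedes_in_Cons inj_eq inj_image_mem_iff)

lemma precedes_in_set: "precedes_in xs v w \<Longrightarrow> v \<in> set xs \<and> w \<in> set xs"
  by (auto simp: precedes_in_def)

lemma precedes_eq_precedes_in: "precedes t v w = precedes_in (postorder t) v w"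
  by (simp add: precedes_def precedes_in_def)

lemma card_set_inner: "card (set (inner t)) = isize t"
proof -
  have "distinct (inner t)" by (induction t) (auto simp: distinct_map)
  moreover have "length (inner t) = isize t" by (induction t) auto
  ultimately show ?thesis by (simp add: distinct_card)
qed

lemma set_postorder: "set (postorder t) = set (leaves t) \<union> set (inner t)"
  by (induction t) auto

lemma leftmost_in_leaves: "leftmost t \<in> set (leaves t)"
  by (induction t) auto

lemma leftmost_notin_inner: "leftmost t \<notin> set (inner t)"
  by (induction t) auto

lemma postorder_starts_with_leftmost: "\<exists>rest. postorder t = leftmost t # rest"
  by (induction t) auto

definition inner_before :: "bt \<Rightarrow> bool list \<Rightarrow> nat" where
  "inner_before t x = card {v \<in> set (inner t). precedes t v x}"

lemma inner_before_L: "inner_before L x = 0"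
  by (simp add: inner_before_def)

lemma inner_before_N_left: "inner_before (N l r) (False # x) = inner_before l x"
proof -
  have "{v \<in> set (inner (N l r)). precedes (N l r) v (False # x)} =
        Cons False ` {v \<in> set (inner l). precedes l v x}"
    by (auto simp: precedes_eq_precedes_in precedes_in_append precedes_in_map precedes_in_Cons
        dest: precedes_in_set)
  then show ?thesis by (simp add: inner_before_def card_image)
qed

lemma inner_before_N_right:
  assumes "x \<in> set (postorder r)"
  shows "inner_before (N l r) (True # x) = isize l + inner_before r x"
proof -
  have "{v \<in> set (inner (N l r)). precedes (N l r) v (True # x)} =
        Cons False ` set (inner l) \<union> Cons True ` {v \<in> set (inner r). precedes r v x}"
    using assms set_postorder[of l]
    by (auto simp: precedes_eq_precedes_in precedes_in_append precedes_in_map precedes_in_Cons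
        dest: precedes_in_set)
  moreover have "card (Cons False ` set (inner l) \<union> Cons True ` {v \<in> set (inner r). precedes r v x})
                 = isize l + inner_before r x"
    by (subst card_Un_disjoint) (auto simp: card_image card_set_inner inner_before_def)
  ultimately show ?thesis by (simp add: inner_before_def)
qed

lemma inner_before_leftmost: "inner_before t (leftmost t) = 0"
  by (induction t) (simp_all add: inner_before_L inner_before_N_left)

(* k counts the internal nodes preceding the tree in postorder. The left-most leaf of a whole
   spine gets the factor 0 + 1, which accounts for it carrying no pointer. *)
fun pointer_count :: "bt \<Rightarrow> nat \<Rightarrow> nat" where
  "pointer_count L k = k + 1"
| "pointer_count (N l r) k = pointer_count l k * pointer_count r (k + isize l)"

lemma pointer_count_eq_prod:
  "pointer_count t k = (\<Prod>x\<in>set (leaves t). k + 1 + inner_before t x)"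
proof (induction t arbitrary: k)
  case L
  then show ?case by (simp add: inner_before_L)
next
  case (N l r)
  have "(\<Prod>x\<in>set (leaves (N l r)). k + 1 + inner_before (N l r) x)
        = (\<Prod>x\<in>Cons False ` set (leaves l). k + 1 + inner_before (N l r) x)
        * (\<Prod>x\<in>Cons True ` set (leaves r). k + 1 + inner_before (N l r) x)"
    unfolding leaves.simps set_append set_map by (rule prod.union_disjoint) auto
  also have "\<dots> = pointer_count l k * pointer_count r (k + isize l)"
    using set_postorder[of r]
    by (simp add: prod.reindex N.IH inner_before_N_left inner_before_N_right add.assoc)
  finally show ?case by simp
qed

definition maps_with_dom :: "'a set \<Rightarrow> ('a \<Rightarrow> 'b set) \<Rightarrow> ('a \<Rightarrow> 'b option) set" where
  "maps_with_dom A B = {f. dom f = A \<and> (\<forall>x y. f x = Some y \<longrightarrow> y \<in> B x)}"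

lemma maps_with_dom_eq_image:
  "maps_with_dom A B = (\<lambda>g x. if x \<in> A then Some (g x) else None) ` PiE A B"
proof (intro equalityI subsetI)
  fix f assume "f \<in> maps_with_dom A B"
  then have dom: "dom f = A" and range: "\<And>x y. f x = Some y \<Longrightarrow> y \<in> B x"
    by (auto simp: maps_with_dom_def)
  define g where "g = restrict (\<lambda>x. the (f x)) A"
  have "f x = (if x \<in> A then Some (g x) else None)" for x
    using dom by (auto simp: g_def)
  moreover have "g \<in> PiE A B"
    using dom range by (auto simp: g_def)
  ultimately show "f \<in> (\<lambda>g x. if x \<in> A then Some (g x) else None) ` PiE A B"
    by (intro image_eqI[of _ _ g]) auto
next
  fix f assume "f \<in> (\<lambda>g x. if x \<in> A then Some (g x) else None) ` PiE A B"
  then obtain g where g: "g \<in> PiE A B" and f: "f = (\<lambda>x. if x \<in> A then Some (g x) else None)"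
    by blast
  have "dom f = A" by (auto simp: f dom_def split: if_splits)
  moreover have "y \<in> B x" if "f x = Some y" for x y
    using that g by (auto simp: f split: if_splits)
  ultimately show "f \<in> maps_with_dom A B"
    by (auto simp: maps_with_dom_def)
qed

lemma inj_on_maps_with_dom_image:
  "inj_on (\<lambda>g x. if x \<in> A then Some (g x) else None) (PiE A B)"
proof (rule inj_onI)
  fix g h
  assume g: "g \<in> PiE A B" and h: "h \<in> PiE A B"
    and eq: "(\<lambda>x. if x \<in> A then Some (g x) else None) = (\<lambda>x. if x \<in> A then Some (h x) else None)"
  show "g = h"
  proof (rule PiE_ext[OF g h])
    fix x assume "x \<in> A"
    then show "g x = h x" using fun_cong[OF eq, of x] by simp
  qed
qed

lemma finite_maps_with_dom:
  assumes "finite A" "\<And>x. x \<in> A \<Longrightarrow> finite (B x)"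
  shows "finite (maps_with_dom A B)"
  unfolding maps_with_dom_eq_image using assms by (intro finite_imageI finite_PiE)

lemma card_maps_with_dom:
  assumes "finite A"
  shows "card (maps_with_dom A B) = (\<Prod>x\<in>A. card (B x))"
  unfolding maps_with_dom_eq_image card_image[OF inj_on_maps_with_dom_image]
  using assms by (rule card_PiE)

definition targets :: "bt \<Rightarrow> bool list \<Rightarrow> bool list set" where
  "targets t x = {v. (v \<in> set (inner t) \<or> v = leftmost t) \<and> precedes t v x}"

lemma relaxed_trees_eq_Sigma:
  "relaxed_trees n =
     Sigma {t. isize t = n} (\<lambda>t. maps_with_dom (set (leaves t) - {leftmost t}) (targets t))"
  by (auto simp: relaxed_trees_def maps_with_dom_def targets_def)

lemma finite_targets: "finite (targets t x)"
proof -
  have "targets t x \<subseteq> insert (leftmost t) (set (inner t))"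
    by (auto simp: targets_def)
  then show ?thesis by (rule finite_subset) simp
qed

lemma card_targets:
  assumes "x \<in> set (leaves t) - {leftmost t}"
  shows "card (targets t x) = 1 + inner_before t x"
proof -
  obtain rest where rest: "postorder t = leftmost t # rest"
    using postorder_starts_with_leftmost by blast
  have "x \<in> set (postorder t)"
    using assms set_postorder[of t] by blast
  then have "x \<in> set rest"
    using assms rest by simp
  then have "precedes t (leftmost t) x"
    by (simp add: precedes_eq_precedes_in rest precedes_in_Cons)
  then have "targets t x = insert (leftmost t) {v \<in> set (inner t). precedes t v x}"
    by (auto simp: targets_def)
  then show ?thesis
    by (simp add: inner_before_def leftmost_notin_inner)
qed

lemma card_pointer_maps:
  "card (maps_with_dom (set (leaves t) - {leftmost t}) (targets t)) = pointer_count t 0"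
proof -
  have "card (maps_with_dom (set (leaves t) - {leftmost t}) (targets t))
        = (\<Prod>x\<in>set (leaves t) - {leftmost t}. 1 + inner_before t x)"
    by (simp add: card_maps_with_dom card_targets)
  also have "\<dots> = (\<Prod>x\<in>set (leaves t). 0 + 1 + inner_before t x)"
    using prod.remove[OF finite_set leftmost_in_leaves, of "\<lambda>x. 0 + 1 + inner_before t x" t]
    by (simp add: inner_before_leftmost)
  also have "\<dots> = pointer_count t 0"
    by (simp only: pointer_count_eq_prod)
  finally show ?thesis .
qed

section \<open>Forests\<close>

fun forest_pointer_count :: "bt list \<Rightarrow> nat \<Rightarrow> nat" where
  "forest_pointer_count [] k = 1"
| "forest_pointer_count (t # ts) k = pointer_count t k * forest_pointer_count ts (k + isize t)"

lemma forest_pointer_count_snoc: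
  "forest_pointer_count (ts @ [t]) k =
     forest_pointer_count ts k * pointer_count t (k + sum_list (map isize ts))"
  by (induction ts arbitrary: k) (auto simp: algebra_simps)

lemma forest_pointer_count_snoc_N:
  "forest_pointer_count (ts @ [N l r]) k = forest_pointer_count (ts @ [l, r]) k"
  using forest_pointer_count_snoc[of "ts @ [l]" r k]
  by (simp add: forest_pointer_count_snoc algebra_simps)

lemma finite_isize_le: "finite {t. isize t \<le> n}"
proof (induction n)
  case 0
  have "{t. isize t \<le> 0} = {L}" by (auto elim: isize.elims)
  then show ?case by simp
next
  case (Suc n)
  have "{t. isize t \<le> Suc n} \<subseteq> insert L ((\<lambda>(l, r). N l r) ` ({t. isize t \<le> n} \<times> {t. isize t \<le> n}))"
  proof
    fix t assume "t \<in> {t. isize t \<le> Suc n}"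
    then show "t \<in> insert L ((\<lambda>(l, r). N l r) ` ({t. isize t \<le> n} \<times> {t. isize t \<le> n}))"
      by (cases t) auto
  qed
  moreover have "finite (insert L ((\<lambda>(l, r). N l r) ` ({t. isize t \<le> n} \<times> {t. isize t \<le> n})))"
    using Suc by simp
  ultimately show ?case by (rule finite_subset)
qed

definition forests :: "nat \<Rightarrow> nat \<Rightarrow> bt list set" where
  "forests a b = {ts. length ts + b = a + 1 \<and> sum_list (map isize ts) = b}"

definition forest_sum :: "nat \<Rightarrow> nat \<Rightarrow> nat" where
  "forest_sum a b = (\<Sum>ts\<in>forests a b. forest_pointer_count ts 0)"

lemma finite_forests: "finite (forests a b)"
proof -
  have "forests a b \<subseteq> {ts. set ts \<subseteq> {t. isize t \<le> b} \<and> length ts \<le> a + 1}"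
    using member_le_sum_list[of _ "map isize _"] by (fastforce simp: forests_def)
  then show ?thesis
    using finite_lists_length_le[OF finite_isize_le] by (rule finite_subset)
qed

lemma forests_0_0: "forests 0 0 = {[L]}"
  by (auto simp: forests_def length_Suc_conv elim: isize.elims)

lemma forests_eq_empty:
  assumes "a < b"
  shows "forests a b = {}"
proof -
  have False if "length ts + b = a + 1" "sum_list (map isize ts) = b" for ts
  proof -
    have "length ts = 0" using that(1) assms by linarith
    then show False using that assms by simp
  qed
  then show ?thesis by (auto simp: forests_def)
qed

definition forests_ending_in_node :: "nat \<Rightarrow> nat \<Rightarrow> (bt list \<times> bt \<times> bt) set" where
  "forests_ending_in_node a b = {(ts, l, r). ts @ [N l r] \<in> forests a b}"

lemma forests_ending_in_node_0: "forests_ending_in_node a 0 = {}"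
  by (auto simp: forests_ending_in_node_def forests_def)

lemma forests_Suc:
  "forests (Suc a) b = (\<lambda>ts. ts @ [L]) ` forests a b
     \<union> (\<lambda>(ts, l, r). ts @ [N l r]) ` forests_ending_in_node (Suc a) b"
  (is "_ = ?leaf \<union> ?node")
proof (intro equalityI subsetI)
  fix xs assume xs: "xs \<in> forests (Suc a) b"
  then have "xs \<noteq> []" by (auto simp: forests_def)
  then obtain ts t where xs_eq: "xs = ts @ [t]" by (metis rev_exhaust)
  show "xs \<in> ?leaf \<union> ?node"
  proof (cases t)
    case L
    then have "ts \<in> forests a b" using xs xs_eq by (simp add: forests_def)
    then show ?thesis using xs_eq L by blast
  next
    case (N l r)
    then show ?thesis using xs xs_eq by (force simp: forests_ending_in_node_def)
  qed
qed (auto simp: forests_def forests_ending_in_node_def)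

lemma forests_merge:
  assumes "b \<le> a"
  shows "(\<lambda>(ts, l, r). ts @ [l, r]) ` forests_ending_in_node (Suc a) (Suc b) = forests (Suc a) b"
    (is "?merge ` _ = _")
proof (intro equalityI subsetI)
  fix xs assume xs: "xs \<in> forests (Suc a) b"
  then have length_xs: "2 \<le> length xs" using assms by (simp add: forests_def)
  then obtain ys r where ys: "xs = ys @ [r]"
    by (cases xs rule: rev_cases) auto
  with length_xs obtain ts l where "ys = ts @ [l]"
    by (cases ys rule: rev_cases) auto
  with ys have xs_eq: "xs = ts @ [l, r]" by simp
  have "(ts, l, r) \<in> forests_ending_in_node (Suc a) (Suc b)"
    using xs unfolding xs_eq by (simp add: forests_ending_in_node_def forests_def)
  then show "xs \<in> ?merge ` forests_ending_in_node (Suc a) (Suc b)"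
    by (rule image_eqI[rotated]) (simp add: xs_eq)
next
  fix xs assume "xs \<in> ?merge ` forests_ending_in_node (Suc a) (Suc b)"
  then obtain ts l r where "xs = ts @ [l, r]" "ts @ [N l r] \<in> forests (Suc a) (Suc b)"
    by (auto simp: forests_ending_in_node_def)
  then show "xs \<in> forests (Suc a) b" by (simp add: forests_def)
qed

lemma sum_forests_ending_in_node:
  assumes "b \<le> Suc a"
  shows "(\<Sum>(ts, l, r)\<in>forests_ending_in_node (Suc a) b. forest_pointer_count (ts @ [N l r]) 0)
         = (if b = 0 then 0 else forest_sum (Suc a) (b - 1))"
proof (cases b)
  case 0
  then show ?thesis by (simp add: forests_ending_in_node_0)
next
  case (Suc b')
  let ?E = "forests_ending_in_node (Suc a) b"
  have inj_merge: "inj_on (\<lambda>(ts, l, r). ts @ [l, r]) ?E"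
    by (auto simp: inj_on_def dest: arg_cong[where f = rev])
  have "(\<Sum>(ts, l, r)\<in>?E. forest_pointer_count (ts @ [N l r]) 0)
        = (\<Sum>(ts, l, r)\<in>?E. forest_pointer_count (ts @ [l, r]) 0)"
    by (simp only: forest_pointer_count_snoc_N)
  also have "\<dots> = (\<Sum>xs\<in>(\<lambda>(ts, l, r). ts @ [l, r]) ` ?E. forest_pointer_count xs 0)"
    by (subst sum.reindex[OF inj_merge]) (simp add: case_prod_unfold comp_def)
  also have "\<dots> = forest_sum (Suc a) b'"
    using Suc assms forests_merge[of b' a] by (simp add: forest_sum_def)
  finally show ?thesis using Suc by simp
qed

lemma forest_sum_Suc:
  assumes "b \<le> Suc a"
  shows "forest_sum (Suc a) b = (b + 1) * forest_sum a b + (if b = 0 then 0 else forest_sum (Suc a) (b - 1))"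
proof -
  let ?E = "forests_ending_in_node (Suc a) b"
  have inj_leaf: "inj_on (\<lambda>ts. ts @ [L]) (forests a b)" by (auto simp: inj_on_def)
  have inj_node: "inj_on (\<lambda>(ts, l, r). ts @ [N l r]) ?E" by (auto simp: inj_on_def)
  have finite_node: "finite ((\<lambda>(ts, l, r). ts @ [N l r]) ` ?E)"
    using finite_forests[of "Suc a" b] by (rule finite_subset[rotated]) (auto simp: forests_Suc)
  have "forest_sum (Suc a) b =
          (\<Sum>xs\<in>(\<lambda>ts. ts @ [L]) ` forests a b \<union> (\<lambda>(ts, l, r). ts @ [N l r]) ` ?E.
             forest_pointer_count xs 0)"
    unfolding forest_sum_def by (rule arg_cong[OF forests_Suc])
  also have "\<dots> = (\<Sum>xs\<in>(\<lambda>ts. ts @ [L]) ` forests a b. forest_pointer_count xs 0)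
        + (\<Sum>xs\<in>(\<lambda>(ts, l, r). ts @ [N l r]) ` ?E. forest_pointer_count xs 0)"
    by (rule sum.union_disjoint) (auto simp: finite_forests finite_node)
  also have "\<dots> = (\<Sum>ts\<in>forests a b. forest_pointer_count (ts @ [L]) 0)
        + (\<Sum>(ts, l, r)\<in>?E. forest_pointer_count (ts @ [N l r]) 0)"
    by (subst sum.reindex[OF inj_leaf], subst sum.reindex[OF inj_node])
      (simp add: case_prod_unfold comp_def)
  also have "(\<Sum>ts\<in>forests a b. forest_pointer_count (ts @ [L]) 0) = (b + 1) * forest_sum a b"
    by (simp add: forest_sum_def sum_distrib_left forest_pointer_count_snoc forests_def mult.commute)
  finally show ?thesis by (simp add: sum_forests_ending_in_node[OF assms])
qed

lemma forest_sum_eq_rab: "forest_sum a b = rab a b"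
proof -
  have "forest_sum a b = of_nat (rab a b)"
  proof (rule eq_rab_if_rec)
    show "forest_sum 0 0 = 1"
      by (simp add: forest_sum_def forests_0_0)
    show "forest_sum a b = 0" if "a < b" for a b
      using that by (simp add: forest_sum_def forests_eq_empty)
    show "forest_sum (Suc a) b = of_nat (b + 1) * forest_sum a b
            + (if b = 0 then 0 else forest_sum (Suc a) (b - 1))" if "b \<le> Suc a" for a b
      using forest_sum_Suc[OF that] by simp
  qed
  then show ?thesis by simp
qed

lemma card_relaxed_trees: "card (relaxed_trees n) = rab n n"
proof -
  have finite_spines: "finite {t. isize t = n}"
    using finite_isize_le[of n] by (rule finite_subset[rotated]) auto
  have "card (relaxed_trees n) = (\<Sum>t | isize t = n. pointer_count t 0)"
    unfolding relaxed_trees_eq_Sigma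
    by (simp add: card_SigmaI finite_spines finite_maps_with_dom finite_targets card_pointer_maps)
  also have "\<dots> = forest_sum n n"
  proof -
    have "forests n n = (\<lambda>t. [t]) ` {t. isize t = n}"
      by (auto simp: forests_def length_Suc_conv)
    then show ?thesis
      by (simp add: forest_sum_def sum.reindex inj_on_def)
  qed
  finally show ?thesis by (simp add: forest_sum_eq_rab)
qed

theorem corollary3p3:
  shows "(\<forall>n m. m \<le> n \<longrightarrow> even (n + m) \<longrightarrow>
            dnm n m = real (rab ((n + m) div 2) ((n - m) div 2)) / fact ((n + m) div 2))
       \<and> (\<forall>n m. m \<le> n \<longrightarrow> odd (n + m) \<longrightarrow> dnm n m = 0)
       \<and> (\<forall>n. real (card (relaxed_trees n)) = fact n * dnm (2 * n) 0)"
proof (intro conjI allI impI)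
  fix n m :: nat
  assume "m \<le> n" "even (n + m)"
  then show "dnm n m = real (rab ((n + m) div 2) ((n - m) div 2)) / fact ((n + m) div 2)"
    by (rule dnm_eq_rab_div_fact)
next
  fix n m :: nat
  assume "odd (n + m)"
  then show "dnm n m = 0" by (simp add: dnm_eq_0)
next
  fix n :: nat
  have "dnm (2 * n) 0 = real (rab n n) / fact n"
    using dnm_eq_rab_div_fact[of 0 "2 * n"] by simp
  then show "real (card (relaxed_trees n)) = fact n * dnm (2 * n) 0"
    by (simp add: card_relaxed_trees)
qed

end
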